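(* Let $v:\mathbb{R}^n\to\mathbb{R}$ be a function (the output of a neural network), let $\boldsymbol{x}=[x_1,\dots,x_n]^T\in\mathbb{R}^n$, let $\boldsymbol{\mu}=[\mu_1,\dots,\mu_n]^T\in\mathbb{R}^n$ with $x_i\neq\mu_i$ for all $i$, and let $\tau>0$. Define the baseline point $\boldsymbol{b}=[b_1,\dots,b_n]^T$ by $b_i=x_i+\tau$ if $x_i<\mu_i$ and $b_i=x_i-\tau$ if $x_i>\mu_i$. Assume $v$ equals its (multivariate) Taylor series expanded at $\boldsymbol{b}$, i.e. for every $\boldsymbol{z}\in\mathbb{R}^n$, $$v(\boldsymbol{z})=\sum_{\boldsymbol{\kappa}\in\mathbb{N}^n} C(\boldsymbol{\kappa})\,\nabla_v(\boldsymbol{\kappa})\,\prod_{i=1}^n (z_i-b_i)^{\kappa_i},$$ where $C(\boldsymbol{\kappa})=\frac{1}{(\kappa_1+\dots+\kappa_n)!}\binom{\kappa_1+\dots+\kappa_n}{\kappa_1,\dots,\kappa_n}$ and $\nabla_v(\boldsymbol{\kappa})=\frac{\partial^{\kappa_1+\dots+\kappa_n}v(\boldsymbol{b})}{\partial^{\kappa_1}x_1\cdots\partial^{\kappa_n}x_n}$. Let $\boldsymbol{\epsilon}\sim\mathcal{N}(\boldsymbol{0},\delta^2\boldsymbol{I})$ and $\boldsymbol{x}'=\boldsymbol{x}+\boldsymbol{\epsilon}$. Let $N=\{1,\dots,n\}$; for $T\subseteq N$ let $\boldsymbol{x}'_T\in\mathbb{R}^n$ be given by $(\boldsymbol{x}'_T)_i=x'_i$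 if $i\in T$ and $(\boldsymbol{x}'_T)_i=b_i$ if $i\notin T$; and for $S\subseteq N$ let $I(S\mid\boldsymbol{x}')=\sum_{T\subseteq S}(-1)^{|S|-|T|}v(\boldsymbol{x}'_T)$. For $\boldsymbol{\kappa}\in\mathbb{N}^n$ let $\pi(\boldsymbol{\kappa}\mid\boldsymbol{x}')=\prod_{i=1}^n(x'_i-b_i)^{\kappa_i}$, $\hat\pi(\boldsymbol{\kappa}\mid\boldsymbol{x}')=\prod_{i=1}^n\big(\frac{\operatorname{sign}(x_i-b_i)}{\tau}\big)^{\kappa_i}\pi(\boldsymbol{\kappa}\mid\boldsymbol{x}')$ and $Z(\boldsymbol{\kappa})=\prod_{i=1}^n\big(\frac{\tau}{\operatorname{sign}(x_i-b_i)}\big)^{\kappa_i}C(\boldsymbol{\kappa})\nabla_v(\boldsymbol{\kappa})$. For $S\subseteq N$ let $Q_S=\{\boldsymbol{\kappa}\in\mathbb{N}^n : \kappa_i\geq 1\ \forall i\in S,\ \kappa_i=0\ \forall i\notin S\}$. Then for every $S\subseteq N$ (and every realization of $\boldsymbol{\epsilon}$), $$I(S\mid\boldsymbol{x}')=\sum_{\boldsymbol{\kappa}\in Q_S}C(\boldsymbol{\kappa})\nabla_v(\boldsymbol{\kappa})\pi(\boldsymbol{\kappa}\mid\boldsymbol{x}')=\sum_{\boldsymbol{\kappa}\in Q_S}Z(\boldsymbol{\kappa})\hat\pi(\boldsymbol{\kappa}\mid\boldsymbol{x}');$$ for every $\boldsymbol{\kappa}\in Q_S$, $\mathbb{E}_{\boldsymbol{\epsilon}}[\hat\pi(\boldsymbol{\kappa}\mid\boldsymbol{x}+\boldsymbol{\epsilon})]=1+O(\delta^2)$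 as $\delta\to0$; and for every $\boldsymbol{\kappa}\in Q_S$, $$\mathbb{E}_{\boldsymbol{\epsilon}}[\hat\pi^2(\boldsymbol{\kappa}\mid\boldsymbol{x}+\boldsymbol{\epsilon})]=\prod_{i\in S}\Big[1+\sum_{m=1}^{\kappa_i}c_m V_{2m}(\epsilon_i)\Big],$$ where $V_{2m}(\epsilon_i)=\mathbb{E}[\epsilon_i^{2m}]>0$ and $c_m=\binom{2\kappa_i}{2m}\frac{1}{\tau^{2m}}>0$.
   Context: $\mathbb{N}=\{0,1,2,\dots\}$ and $\mathbb{N}^+=\{1,2,\dots\}$. $I(S\mid\boldsymbol{x}')$ is the Harsanyi dividend (interaction effect) of the set $S$ of input variables, where a masked variable is replaced by its baseline value $b_i$. $\operatorname{sign}(x_i-b_i)\in\{+1,-1\}$ (nonzero since $|x_i-b_i|=\tau$). The components $\epsilon_1,\dots,\epsilon_n$ are independent $\mathcal{N}(0,\delta^2)$ variables. *)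

theory Defs
  imports "HOL-Probability.Probability" "HOL-Library.Landau_Symbols"
begin

definition partial_i :: "'n::finite \<Rightarrow> (real^'n \<Rightarrow> real) \<Rightarrow> real^'n \<Rightarrow> real" where
  "partial_i i f z = deriv (\<lambda>t. f (\<chi> j. if j = i then t else z $ j)) (z $ i)"

text \<open>Mixed partial derivative of order kappa, evaluated at b; coordinates are
  differentiated in an (arbitrary) fixed enumeration order of the index type.\<close>
definition nabla :: "(real^'n::finite \<Rightarrow> real) \<Rightarrow> real^'n \<Rightarrow> ('n \<Rightarrow> nat) \<Rightarrow> real" where
  "nabla f b kappa =
     foldr (\<lambda>i g. (partial_i i ^^ kappa i) g)
           (SOME l. distinct l \<and> set l = (UNIV :: 'n set)) f b"

definition Ccoef :: "('n::finite \<Rightarrow> nat) \<Rightarrow> real" where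
  "Ccoef kappa = 1 / fact (\<Sum>i\<in>UNIV. kappa i) *
                 (fact (\<Sum>i\<in>UNIV. kappa i) / (\<Prod>i\<in>UNIV. fact (kappa i)))"

definition baseline :: "real^'n::finite \<Rightarrow> real^'n \<Rightarrow> real \<Rightarrow> real^'n" where
  "baseline x mu tau = (\<chi> i. if x $ i < mu $ i then x $ i + tau else x $ i - tau)"

definition masked :: "real^'n::finite \<Rightarrow> real^'n \<Rightarrow> 'n set \<Rightarrow> real^'n" where
  "masked x' b T = (\<chi> i. if i \<in> T then x' $ i else b $ i)"

definition harsanyi :: "(real^'n::finite \<Rightarrow> real) \<Rightarrow> real^'n \<Rightarrow> real^'n \<Rightarrow> 'n set \<Rightarrow> real" where
  "harsanyi v b x' S = (\<Sum>T\<in>Pow S. (-1) ^ (card S - card T) * v (masked x' b T))"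

definition pi_mon :: "real^'n::finite \<Rightarrow> real^'n \<Rightarrow> ('n \<Rightarrow> nat) \<Rightarrow> real" where
  "pi_mon b x' kappa = (\<Prod>i\<in>UNIV. (x' $ i - b $ i) ^ kappa i)"

definition pihat :: "real^'n::finite \<Rightarrow> real^'n \<Rightarrow> real \<Rightarrow> real^'n \<Rightarrow> ('n \<Rightarrow> nat) \<Rightarrow> real" where
  "pihat x b tau x' kappa =
     (\<Prod>i\<in>UNIV. (sgn (x $ i - b $ i) / tau) ^ kappa i) * pi_mon b x' kappa"

definition Zcoef :: "(real^'n::finite \<Rightarrow> real) \<Rightarrow> real^'n \<Rightarrow> real^'n \<Rightarrow> real \<Rightarrow> ('n \<Rightarrow> nat) \<Rightarrow> real" where
  "Zcoef v x b tau kappa =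
     (\<Prod>i\<in>UNIV. (tau / sgn (x $ i - b $ i)) ^ kappa i) * Ccoef kappa * nabla v b kappa"

definition Qset :: "'n::finite set \<Rightarrow> ('n \<Rightarrow> nat) set" where
  "Qset S = {kappa. (\<forall>i\<in>S. 1 \<le> kappa i) \<and> (\<forall>i. i \<notin> S \<longrightarrow> kappa i = 0)}"

definition gauss_expect :: "real \<Rightarrow> (real^'n::finite \<Rightarrow> real) \<Rightarrow> real" where
  "gauss_expect delta f =
     (LINT e|lborel. (\<Prod>i\<in>UNIV. normal_density 0 delta (e $ i)) * f e)"

definition gauss_moment :: "real \<Rightarrow> nat \<Rightarrow> real" where
  "gauss_moment delta k = (LINT t|lborel. normal_density 0 delta t * t ^ k)"

end

(*
  Masking the variables outside T replaces the monomial pi(kappa | x') of the Taylor expansion at b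
  by itself if the support of kappa lies in T and by 0 otherwise, so by Moebius inversion over the
  subsets of S the Harsanyi dividend I(S | x') keeps exactly the monomials whose support is S.

  Since every coordinate of x is at distance tau from b, the normalised monomial factorises as
  pihat(kappa | x + eps) = prod_i (1 + c_i eps_i)^kappa_i with c_i = +-1/tau.  Independence of the
  coordinates of eps turns its Gaussian expectation (and that of its square) into a product of
  one-dimensional ones, and the binomial theorem expresses each factor through the moments
  E[eps_i^j]: the odd moments vanish and the even ones are O(delta^2).
*)
theory Submission
  imports Defs
begin

section \<open>Harsanyi dividends of a Taylor series\<close>

lemma has_sum_sum:
  fixes f :: "'b \<Rightarrow> 'a \<Rightarrow> 'c::topological_comm_monoid_add"
  assumes "finite I" "\<And>i. i \<in> I \<Longrightarrow> (f i has_sum s i) A"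
  shows "((\<lambda>x. \<Sum>i\<in>I. f i x) has_sum (\<Sum>i\<in>I. s i)) A"
  using assms by (induction I rule: finite_induct) (auto intro: has_sum_add)

lemma sum_Pow_sign_indicator_superset:
  assumes "finite S"
  shows "(\<Sum>T\<in>Pow S. (-1) ^ (card S - card T) * (if K \<subseteq> T then 1 else 0)) =
         (if S = K then 1 else (0::'a::ring_1))"
proof -
  have "(\<lambda>U. if U = K then 1 else (0::'a)) S =
        (\<Sum>T\<in>Pow S. (-1) ^ (card S - card T) * (if K \<subseteq> T then 1 else 0))"
    by (rule inclusion_exclusion_mobius[OF _ assms]) (simp add: sum.delta)
  then show ?thesis by simp
qed

lemma Qset_iff_support: "kappa \<in> Qset S \<longleftrightarrow> S = {i. kappa i \<noteq> 0}"
  unfolding Qset_def by auto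

lemma monomial_masked:
  "(\<Prod>i\<in>UNIV. (masked x' b T $ i - b $ i) ^ kappa i) =
     (if {i. kappa i \<noteq> 0} \<subseteq> T then pi_mon b x' kappa else 0)"
proof (cases "{i. kappa i \<noteq> 0} \<subseteq> T")
  case True
  then have "(masked x' b T $ i - b $ i) ^ kappa i = (x' $ i - b $ i) ^ kappa i" for i
    by (cases "kappa i = 0") (auto simp: masked_def)
  with True show ?thesis by (simp add: pi_mon_def)
next
  case False
  then obtain j where "kappa j \<noteq> 0" "j \<notin> T" by auto
  then have "(masked x' b T $ j - b $ j) ^ kappa j = 0" by (simp add: masked_def)
  then have "(\<Prod>i\<in>UNIV. (masked x' b T $ i - b $ i) ^ kappa i) = 0"
    by (intro prod_zero bexI[of _ j]) auto
  with False show ?thesis by simp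
qed

lemma harsanyi_has_sum_Qset:
  fixes v :: "real^'n::finite \<Rightarrow> real"
  assumes taylor: "\<forall>z. ((\<lambda>kappa. Ccoef kappa * nabla v b kappa
                          * (\<Prod>i\<in>UNIV. (z $ i - b $ i) ^ kappa i)) has_sum v z) UNIV"
  shows "((\<lambda>kappa. Ccoef kappa * nabla v b kappa * pi_mon b x' kappa)
           has_sum harsanyi v b x' S) (Qset S)"
proof -
  define f where "f kappa = Ccoef kappa * nabla v b kappa * pi_mon b x' kappa" for kappa :: "'n \<Rightarrow> nat"
  define sign where "sign T = ((-1) ^ (card S - card T) :: real)" for T :: "'n set"
  have masked_series: "((\<lambda>kappa. if {i. kappa i \<noteq> 0} \<subseteq> T then f kappa else 0)
                          has_sum v (masked x' b T)) UNIV" for T :: "'n set"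
  proof -
    have "Ccoef kappa * nabla v b kappa * (\<Prod>i\<in>UNIV. (masked x' b T $ i - b $ i) ^ kappa i) =
          (if {i. kappa i \<noteq> 0} \<subseteq> T then f kappa else 0)" for kappa
      by (simp add: monomial_masked f_def)
    then show ?thesis
      using taylor[rule_format, of "masked x' b T"] by simp
  qed
  have "((\<lambda>kappa. \<Sum>T\<in>Pow S. sign T * (if {i. kappa i \<noteq> 0} \<subseteq> T then f kappa else 0))
          has_sum harsanyi v b x' S) UNIV"
    unfolding harsanyi_def sign_def[symmetric]
    by (intro has_sum_sum has_sum_cmult_right masked_series) auto
  moreover have "(\<Sum>T\<in>Pow S. sign T * (if {i. kappa i \<noteq> 0} \<subseteq> T then f kappa else 0)) =
                 (if kappa \<in> Qset S then f kappa else 0)" for kappa :: "'n \<Rightarrow> nat"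
  proof -
    have "(\<Sum>T\<in>Pow S. sign T * (if {i. kappa i \<noteq> 0} \<subseteq> T then f kappa else 0)) =
          f kappa * (\<Sum>T\<in>Pow S. sign T * (if {i. kappa i \<noteq> 0} \<subseteq> T then 1 else 0))"
      unfolding sum_distrib_left by (intro sum.cong) (auto simp: mult_ac)
    also have "\<dots> = (if kappa \<in> Qset S then f kappa else 0)"
      unfolding sign_def by (subst sum_Pow_sign_indicator_superset) (auto simp: Qset_iff_support)
    finally show ?thesis .
  qed
  ultimately have "((\<lambda>kappa. if kappa \<in> Qset S then f kappa else 0) has_sum harsanyi v b x' S) UNIV"
    by simp
  then show ?thesis
    unfolding f_def[symmetric]
    by (rule has_sum_cong_neutral[THEN iffD1, rotated -1]) auto
qed

section \<open>Gaussian moments\<close>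

lemma gauss_moment_0: "delta > 0 \<Longrightarrow> gauss_moment delta 0 = 1"
  by (simp add: gauss_moment_def)

lemma gauss_moment_odd:
  assumes "delta > 0" "odd j"
  shows "gauss_moment delta j = 0"
proof -
  obtain m where "j = 2 * m + 1" using \<open>odd j\<close> by (elim oddE)
  then show ?thesis
    unfolding gauss_moment_def using integral_normal_moment_odd[OF assms(1), of 0 m] by simp
qed

lemma gauss_moment_even:
  assumes "delta > 0"
  shows "gauss_moment delta (2 * m) = fact (2 * m) / (2 ^ m * fact m) * delta ^ (2 * m)"
proof -
  have "gauss_moment delta (2 * m) = fact (2 * m) / ((2 / delta\<^sup>2) ^ m * fact m)"
    unfolding gauss_moment_def using integral_normal_moment_even[OF assms, of 0 m] by simp
  also have "(2 / delta\<^sup>2) ^ m = 2 ^ m / delta ^ (2 * m)"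
    by (simp add: power_divide power_mult)
  finally show ?thesis using assms by (simp add: field_simps)
qed

lemma gauss_moment_even_pos: "delta > 0 \<Longrightarrow> gauss_moment delta (2 * m) > 0"
  by (simp add: gauss_moment_even)

lemma normal_density_mult_affine_power:
  "normal_density 0 delta t * (1 + c * t) ^ k =
     (\<Sum>j\<le>k. real (k choose j) * c ^ j * (normal_density 0 delta t * t ^ j))"
proof -
  have "(1 + c * t) ^ k = (\<Sum>j\<le>k. real (k choose j) * (c * t) ^ j)"
    using binomial_ring[of "c * t" 1 k] by (simp add: add.commute)
  then show ?thesis by (simp add: sum_distrib_left power_mult_distrib mult_ac)
qed

lemma integrable_normal_moment_0:
  "delta > 0 \<Longrightarrow> integrable lborel (\<lambda>t. normal_density 0 delta t * t ^ j)"
  using integrable_normal_moment[of delta 0 j] by simp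

lemma integrable_normal_affine_power:
  "delta > 0 \<Longrightarrow> integrable lborel (\<lambda>t. normal_density 0 delta t * (1 + c * t) ^ k)"
  unfolding normal_density_mult_affine_power
  by (intro Bochner_Integration.integrable_sum Bochner_Integration.integrable_mult_right
            integrable_normal_moment_0)

lemma integral_normal_affine_power:
  "delta > 0 \<Longrightarrow> (LINT t|lborel. normal_density 0 delta t * (1 + c * t) ^ k) =
     (\<Sum>j\<le>k. real (k choose j) * c ^ j * gauss_moment delta j)"
  unfolding normal_density_mult_affine_power gauss_moment_def
  by (subst Bochner_Integration.integral_sum)
     (auto intro: Bochner_Integration.integrable_mult_right integrable_normal_moment_0)

lemma sum_atMost_even_nat:
  fixes f :: "nat \<Rightarrow> 'a::comm_monoid_add"
  assumes "\<And>j. odd j \<Longrightarrow> f j = 0"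
  shows "(\<Sum>j\<le>2 * k. f j) = (\<Sum>m\<le>k. f (2 * m))"
  by (induction k) (simp_all add: assms)

lemma integral_normal_affine_power_even:
  assumes "delta > 0"
  shows "(LINT t|lborel. normal_density 0 delta t * (1 + c * t) ^ (2 * k)) =
         1 + (\<Sum>m=1..k. real ((2 * k) choose (2 * m)) * c ^ (2 * m) * gauss_moment delta (2 * m))"
proof -
  have "(LINT t|lborel. normal_density 0 delta t * (1 + c * t) ^ (2 * k)) =
        (\<Sum>j\<le>2 * k. real ((2 * k) choose j) * c ^ j * gauss_moment delta j)"
    by (rule integral_normal_affine_power[OF assms])
  also have "\<dots> = (\<Sum>m\<le>k. real ((2 * k) choose (2 * m)) * c ^ (2 * m) * gauss_moment delta (2 * m))"
    by (rule sum_atMost_even_nat) (simp add: gauss_moment_odd[OF assms])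
  also have "\<dots> = 1 + (\<Sum>m=1..k. real ((2 * k) choose (2 * m)) * c ^ (2 * m) * gauss_moment delta (2 * m))"
    using assms by (simp add: atMost_atLeast0 sum.atLeast_Suc_atMost gauss_moment_0)
  finally show ?thesis .
qed

section \<open>Expectations of products over independent coordinates\<close>

lemma integral_lborel_prod_components:
  fixes g :: "'n::finite \<Rightarrow> real \<Rightarrow> real"
  assumes int: "\<And>i. integrable lborel (g i)" and meas: "\<And>i. g i \<in> borel_measurable borel"
  shows "(LINT e|lborel. (\<Prod>i\<in>UNIV. g i (e $ i))) = (\<Prod>i\<in>UNIV. LINT t|lborel. g i t)"
proof -
  let ?T = "\<lambda>f. \<Sum>b\<in>(Basis :: (real^'n) set). f b *\<^sub>R b"
  let ?M = "\<Pi>\<^sub>M b\<in>(Basis :: (real^'n) set). (lborel :: real measure)"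
  have Basis_axis: "(Basis :: (real^'n) set) = range (\<lambda>i. axis i 1)"
    by (auto simp: Basis_vec_def)
  have inj: "inj (\<lambda>i::'n. axis i (1::real))"
    by (auto simp: inj_def axis_eq_axis)
  define h where "h b = g (inv (\<lambda>i. axis i 1) b)" for b :: "real^'n"
  have h_axis: "h (axis i 1) = g i" for i
    by (simp add: h_def inv_f_f[OF inj])
  have meas_prod: "(\<lambda>e::real^'n. \<Prod>i\<in>UNIV. g i (e $ i)) \<in> borel_measurable borel"
    using meas by measurable
  have "(LINT e|lborel. (\<Prod>i\<in>UNIV. g i (e $ i))) = (LINT e|distr ?M borel ?T. (\<Prod>i\<in>UNIV. g i (e $ i)))"
    by (subst lborel_eq) rule
  also have "\<dots> = (LINT f|?M. (\<Prod>i\<in>UNIV. g i (?T f $ i)))"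
    by (rule integral_distr) (auto intro: meas_prod)
  also have "\<dots> = (LINT f|?M. (\<Prod>b\<in>Basis. h b (f b)))"
  proof (rule Bochner_Integration.integral_cong[OF refl])
    fix f :: "real^'n \<Rightarrow> real"
    have "?T f $ i = f (axis i 1)" for i
      by (simp flip: vector_cart)
    then show "(\<Prod>i\<in>UNIV. g i (?T f $ i)) = (\<Prod>b\<in>Basis. h b (f b))"
      unfolding Basis_axis by (simp add: prod.reindex[OF inj] h_axis)
  qed
  also have "\<dots> = (\<Prod>b\<in>Basis. LINT t|lborel. h b t)"
  proof -
    interpret product_sigma_finite "\<lambda>_::real^'n. lborel :: real measure"
      by standard
    show ?thesis
      by (rule product_integral_prod) (auto simp: Basis_axis h_axis int)
  qed
  also have "\<dots> = (\<Prod>i\<in>UNIV. LINT t|lborel. g i t)"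
    unfolding Basis_axis by (simp add: prod.reindex[OF inj] h_axis)
  finally show ?thesis .
qed

lemma gauss_expect_prod_affine_powers:
  fixes c :: "'n::finite \<Rightarrow> real"
  assumes "delta > 0"
  shows "gauss_expect delta (\<lambda>e::real^'n. \<Prod>i\<in>UNIV. (1 + c i * e $ i) ^ k i) =
         (\<Prod>i\<in>UNIV. LINT t|lborel. normal_density 0 delta t * (1 + c i * t) ^ k i)"
  unfolding gauss_expect_def prod.distrib[symmetric]
  by (rule integral_lborel_prod_components)
     (auto intro: integrable_normal_affine_power[OF assms])

lemma gauss_expect_prod_affine_powers_square:
  fixes c :: "'n::finite \<Rightarrow> real"
  assumes "delta > 0"
  shows "gauss_expect delta (\<lambda>e::real^'n. (\<Prod>i\<in>UNIV. (1 + c i * e $ i) ^ k i) ^ 2) =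
         (\<Prod>i\<in>UNIV. 1 + (\<Sum>m=1..k i.
            real ((2 * k i) choose (2 * m)) * c i ^ (2 * m) * gauss_moment delta (2 * m)))"
proof -
  have "(\<lambda>e::real^'n. (\<Prod>i\<in>UNIV. (1 + c i * e $ i) ^ k i) ^ 2) =
        (\<lambda>e. \<Prod>i\<in>UNIV. (1 + c i * e $ i) ^ (2 * k i))"
    by (simp add: prod_power_distrib power_even_eq)
  then show ?thesis
    using assms
    by (simp add: gauss_expect_prod_affine_powers integral_normal_affine_power_even)
qed

section \<open>Small-variance asymptotics\<close>

lemma power_bigo_power_at_right_0:
  assumes "i \<le> j"
  shows "(\<lambda>d::real. d ^ j) \<in> O[at_right 0](\<lambda>d. d ^ i)"
proof (rule bigoI[of _ 1])
  have "eventually (\<lambda>d::real. 0 < d \<and> d < 1) (at_right 0)"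
    unfolding eventually_at_right_field by (intro exI[of _ 1]) auto
  then show "eventually (\<lambda>d::real. norm (d ^ j) \<le> 1 * norm (d ^ i)) (at_right 0)"
    by eventually_elim (use assms in \<open>auto simp: power_decreasing\<close>)
qed

lemma gauss_moment_bigo:
  assumes "1 \<le> j"
  shows "(\<lambda>d. gauss_moment d j) \<in> O[at_right 0](\<lambda>d. d ^ 2)"
proof (cases "even j")
  case True
  then obtain m where m: "j = 2 * m" by (elim evenE)
  have "eventually (\<lambda>d. gauss_moment d j = fact (2 * m) / (2 ^ m * fact m) * d ^ j) (at_right 0)"
    using eventually_at_right_less[of "0::real"] by eventually_elim (simp add: m gauss_moment_even)
  moreover have "(\<lambda>d. fact (2 * m) / (2 ^ m * fact m) * d ^ j :: real) \<in> O[at_right 0](\<lambda>d. d ^ 2)"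
    using assms m by (simp add: power_bigo_power_at_right_0)
  ultimately show ?thesis by (subst landau_o.big.in_cong)
next
  case False
  have "eventually (\<lambda>d. gauss_moment d j = 0) (at_right 0)"
    using eventually_at_right_less[of "0::real"] by eventually_elim (simp add: gauss_moment_odd False)
  from landau_o.big.in_cong[OF this] show ?thesis by simp
qed

lemma integral_normal_affine_power_bigo:
  "(\<lambda>d. (LINT t|lborel. normal_density 0 d t * (1 + c * t) ^ k) - 1) \<in> O[at_right 0](\<lambda>d. d ^ 2)"
proof -
  have "eventually (\<lambda>d. (LINT t|lborel. normal_density 0 d t * (1 + c * t) ^ k) - 1 =
          (\<Sum>j=1..k. real (k choose j) * c ^ j * gauss_moment d j)) (at_right 0)"
    using eventually_at_right_less[of "0::real"]
    by eventually_elim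
       (simp add: integral_normal_affine_power atMost_atLeast0 sum.atLeast_Suc_atMost gauss_moment_0)
  moreover have "(\<lambda>d. \<Sum>j=1..k. real (k choose j) * c ^ j * gauss_moment d j) \<in> O[at_right 0](\<lambda>d. d ^ 2)"
    by (intro big_sum_in_bigo) (simp add: gauss_moment_bigo)
  ultimately show ?thesis by (subst landau_o.big.in_cong)
qed

lemma prod_minus_one_bigo:
  fixes a :: "'i \<Rightarrow> 'a \<Rightarrow> real"
  assumes "finite I" "g \<in> O[F](\<lambda>_. 1)" "\<And>i. i \<in> I \<Longrightarrow> (\<lambda>x. a i x - 1) \<in> O[F](g)"
  shows "(\<lambda>x. (\<Prod>i\<in>I. a i x) - 1) \<in> O[F](g)"
  using assms(1,3)
proof (induction I rule: finite_induct)
  case empty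
  then show ?case by simp
next
  case (insert j I)
  have IH: "(\<lambda>x. (\<Prod>i\<in>I. a i x) - 1) \<in> O[F](g)"
    using insert by auto
  have "(\<lambda>x. ((\<Prod>i\<in>I. a i x) - 1) + 1) \<in> O[F](\<lambda>_. 1)"
    by (intro sum_in_bigo(1) landau_o.big_trans[OF IH assms(2)]) simp
  then have "(\<lambda>x. (a j x - 1) * (\<Prod>i\<in>I. a i x)) \<in> O[F](\<lambda>x. g x * 1)"
    by (intro landau_o.big.mult) (use insert in auto)
  then have "(\<lambda>x. (a j x - 1) * (\<Prod>i\<in>I. a i x) + ((\<Prod>i\<in>I. a i x) - 1)) \<in> O[F](g)"
    by (intro sum_in_bigo(1) IH) simp
  moreover have "(\<lambda>x. (\<Prod>i\<in>insert j I. a i x) - 1) =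
                 (\<lambda>x. (a j x - 1) * (\<Prod>i\<in>I. a i x) + ((\<Prod>i\<in>I. a i x) - 1))"
    using insert by (simp add: algebra_simps)
  ultimately show ?case by (simp only:)
qed

lemma gauss_expect_prod_affine_powers_bigo:
  fixes c :: "'n::finite \<Rightarrow> real"
  shows "(\<lambda>d. gauss_expect d (\<lambda>e::real^'n. \<Prod>i\<in>UNIV. (1 + c i * e $ i) ^ k i) - 1)
           \<in> O[at_right 0](\<lambda>d. d ^ 2)"
proof -
  have "eventually (\<lambda>d. gauss_expect d (\<lambda>e::real^'n. \<Prod>i\<in>UNIV. (1 + c i * e $ i) ^ k i) - 1 =
          (\<Prod>i\<in>UNIV. LINT t|lborel. normal_density 0 d t * (1 + c i * t) ^ k i) - 1) (at_right 0)"
    using eventually_at_right_less[of "0::real"]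
    by eventually_elim (simp add: gauss_expect_prod_affine_powers)
  moreover have "(\<lambda>d. (\<Prod>i\<in>UNIV. LINT t|lborel. normal_density 0 d t * (1 + c i * t) ^ k i) - 1)
                   \<in> O[at_right 0](\<lambda>d. d ^ 2)"
    using power_bigo_power_at_right_0[of 0 2]
    by (intro prod_minus_one_bigo integral_normal_affine_power_bigo) simp_all
  ultimately show ?thesis by (subst landau_o.big.in_cong)
qed

section \<open>The normalised monomials\<close>

lemma Zcoef_mult_pihat:
  assumes "\<forall>i. x $ i \<noteq> b $ i" "tau \<noteq> 0"
  shows "Zcoef v x b tau kappa * pihat x b tau x' kappa = Ccoef kappa * nabla v b kappa * pi_mon b x' kappa"
proof -
  have "(tau / sgn (x $ i - b $ i)) ^ kappa i * (sgn (x $ i - b $ i) / tau) ^ kappa i = 1" for i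
    using assms by (simp flip: power_mult_distrib)
  then have "(\<Prod>i\<in>UNIV. (tau / sgn (x $ i - b $ i)) ^ kappa i) *
             (\<Prod>i\<in>UNIV. (sgn (x $ i - b $ i) / tau) ^ kappa i) = 1"
    by (simp flip: prod.distrib)
  moreover have "Zcoef v x b tau kappa * pihat x b tau x' kappa =
      (\<Prod>i\<in>UNIV. (tau / sgn (x $ i - b $ i)) ^ kappa i) *
      (\<Prod>i\<in>UNIV. (sgn (x $ i - b $ i) / tau) ^ kappa i) *
      (Ccoef kappa * nabla v b kappa * pi_mon b x' kappa)"
    unfolding Zcoef_def pihat_def by (simp only: mult_ac)
  ultimately show ?thesis by simp
qed

lemma abs_baseline_offset: "tau > 0 \<Longrightarrow> \<bar>x $ i - baseline x mu tau $ i\<bar> = tau"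
  by (simp add: baseline_def)

lemma pihat_shift:
  assumes "tau > 0" "\<forall>i. \<bar>x $ i - b $ i\<bar> = tau"
  shows "pihat x b tau (x + e) kappa = (\<Prod>i\<in>UNIV. (1 + sgn (x $ i - b $ i) / tau * e $ i) ^ kappa i)"
proof -
  have "sgn (x $ i - b $ i) / tau * ((x + e) $ i - b $ i) = 1 + sgn (x $ i - b $ i) / tau * e $ i" for i
  proof -
    have "sgn (x $ i - b $ i) * (x $ i - b $ i) = tau"
      using assms(2)[rule_format, of i] by (auto simp: sgn_if split: if_splits)
    then show ?thesis using assms(1) by (simp add: field_simps)
  qed
  then show ?thesis
    unfolding pihat_def pi_mon_def by (simp flip: prod.distrib power_mult_distrib)
qed

lemma prod_UNIV_Qset:
  assumes "kappa \<in> Qset S" "f 0 = 1"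
  shows "(\<Prod>i\<in>UNIV. f (kappa i)) = (\<Prod>i\<in>S. f (kappa i))"
  by (rule prod.mono_neutral_right) (use assms in \<open>auto simp: Qset_def\<close>)

lemma gauss_expect_pihat_bigo:
  assumes "tau > 0" "\<forall>i. \<bar>x $ i - b $ i\<bar> = tau"
  shows "(\<lambda>delta. gauss_expect delta (\<lambda>e. pihat x b tau (x + e) kappa) - 1)
           \<in> O[at_right 0](\<lambda>delta. delta ^ 2)"
  unfolding pihat_shift[OF assms] by (rule gauss_expect_prod_affine_powers_bigo)

lemma gauss_expect_pihat_square:
  assumes "tau > 0" "\<forall>i. \<bar>x $ i - b $ i\<bar> = tau" "delta > 0" "kappa \<in> Qset S"
  shows "gauss_expect delta (\<lambda>e. (pihat x b tau (x + e) kappa) ^ 2) =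
         (\<Prod>i\<in>S. 1 + (\<Sum>m=1..kappa i.
            (real ((2 * kappa i) choose (2 * m)) / tau ^ (2 * m)) * gauss_moment delta (2 * m)))"
proof -
  define c where "c i = sgn (x $ i - b $ i) / tau" for i
  have c_even_power: "c i ^ (2 * m) = 1 / tau ^ (2 * m)" for i m
    using assms(1) assms(2)[rule_format, of i]
    by (auto simp: c_def power_mult power_divide sgn_if split: if_splits)
  let ?F = "\<lambda>k. 1 + (\<Sum>m=1..k. real ((2 * k) choose (2 * m)) / tau ^ (2 * m) * gauss_moment delta (2 * m))"
  have "gauss_expect delta (\<lambda>e. (pihat x b tau (x + e) kappa) ^ 2) = (\<Prod>i\<in>UNIV. ?F (kappa i))"
    unfolding pihat_shift[OF assms(1,2)] c_def[symmetric]
    using assms(3) by (simp add: gauss_expect_prod_affine_powers_square c_even_power)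
  also have "\<dots> = (\<Prod>i\<in>S. ?F (kappa i))"
    by (rule prod_UNIV_Qset[OF assms(4)]) simp
  finally show ?thesis .
qed

theorem theorem1:
  fixes v :: "real^'n::finite \<Rightarrow> real"
    and x mu eps :: "real^'n"
    and tau :: real
    and S :: "'n set"
  assumes neq: "\<forall>i. x $ i \<noteq> mu $ i"
    and tau_pos: "tau > 0"
    and taylor: "\<forall>z. ((\<lambda>kappa. Ccoef kappa * nabla v (baseline x mu tau) kappa
                          * (\<Prod>i\<in>UNIV. (z $ i - baseline x mu tau $ i) ^ kappa i))
                      has_sum v z) UNIV"
  shows
    "((\<lambda>kappa. Ccoef kappa * nabla v (baseline x mu tau) kappa
                 * pi_mon (baseline x mu tau) (x + eps) kappa)
        has_sum harsanyi v (baseline x mu tau) (x + eps) S) (Qset S)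
   \<and> ((\<lambda>kappa. Zcoef v x (baseline x mu tau) tau kappa
                 * pihat x (baseline x mu tau) tau (x + eps) kappa)
        has_sum harsanyi v (baseline x mu tau) (x + eps) S) (Qset S)
   \<and> (\<forall>kappa\<in>Qset S.
        (\<lambda>delta. gauss_expect delta (\<lambda>e. pihat x (baseline x mu tau) tau (x + e) kappa) - 1)
          \<in> O[at_right 0](\<lambda>delta. delta ^ 2))
   \<and> (\<forall>delta>0. \<forall>kappa\<in>Qset S.
        gauss_expect delta (\<lambda>e. (pihat x (baseline x mu tau) tau (x + e) kappa) ^ 2)
          = (\<Prod>i\<in>S. 1 + (\<Sum>m=1..kappa i.
                 (real ((2 * kappa i) choose (2 * m)) / tau ^ (2 * m)) * gauss_moment delta (2 * m)))
        \<and> (\<forall>i\<in>S. \<forall>m\<in>{1..kappa i}.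
              gauss_moment delta (2 * m) > 0
              \<and> real ((2 * kappa i) choose (2 * m)) / tau ^ (2 * m) > 0))"
proof -
  let ?b = "baseline x mu tau"
  have offset: "\<forall>i. \<bar>x $ i - ?b $ i\<bar> = tau"
    using tau_pos by (simp add: abs_baseline_offset)
  then have moved: "\<forall>i. x $ i \<noteq> ?b $ i"
    using tau_pos by (metis abs_zero diff_self less_irrefl)
  have dividend: "((\<lambda>kappa. Ccoef kappa * nabla v ?b kappa * pi_mon ?b (x + eps) kappa)
                    has_sum harsanyi v ?b (x + eps) S) (Qset S)"
    by (rule harsanyi_has_sum_Qset[OF taylor])
  moreover have "((\<lambda>kappa. Zcoef v x ?b tau kappa * pihat x ?b tau (x + eps) kappa)
                   has_sum harsanyi v ?b (x + eps) S) (Qset S)"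
    using dividend moved tau_pos by (simp add: Zcoef_mult_pihat)
  moreover have "\<forall>kappa\<in>Qset S. (\<lambda>delta. gauss_expect delta (\<lambda>e. pihat x ?b tau (x + e) kappa) - 1)
                   \<in> O[at_right 0](\<lambda>delta. delta ^ 2)"
    using gauss_expect_pihat_bigo[OF tau_pos offset] by blast
  moreover note gauss_expect_pihat_square[OF tau_pos offset]
  moreover have "gauss_moment delta (2 * m) > 0 \<and> real ((2 * k) choose (2 * m)) / tau ^ (2 * m) > 0"
    if "delta > 0" "m \<in> {1..k}" for delta k m
    using that tau_pos by (simp add: gauss_moment_even_pos)
  ultimately show ?thesis by blast
qed

end
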